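(* For every probabilistic algorithmic knowledge structure $N$, every agent $i$ and every formula $\phi$ containing no occurrence of any $X_j$ operator, $N\models\underline{\mathrm{Ev}}_i(\phi)=1\Rightarrow\phi$.
   Context: A derandomizer is $v=(v_1,\dots,v_n)$ with each $v_i$ a sequence of coin-toss outcomes; $V$ is the set of derandomizers. A probabilistic algorithmic knowledge structure is $N=(S,\pi,L_1,\dots,L_n,\mathtt{A}^d_1,\dots,\mathtt{A}^d_n,\nu)$ with states $S$, truth assignments $\pi(s)$ to primitive propositions, local-state functions $L_i:S\to\mathcal{L}$, deterministic functions $\mathtt{A}^d_i(\phi,\ell,s,v_i)\in\{$"Yes","No","?"$\}$, and a probability distribution $\nu$ on $V$ such that for all $i,\phi,s$ and each answer $a$, $\{v:\mathtt{A}^d_i(\phi,L_i(s),s,v_i)=a\}$ is nonempty iff it has positive $\nu$-probability. Semantics at pairs $(s,v)$: primitive propositions via $\pi$, $\neg,\wedge,\Rightarrow$ usual, $(N,s,v)\models K_i\phi$ iff $(N,t,v')\models\phi$ for all $v'\in V$ and all $t$ with $L_i(t)=L_i(s)$, $(N,s,v)\models X_i\phi$ iff $\mathtt{A}^d_i(\phi,L_i(s),s,v_i)=$"Yes", $(N,s,v)\models\Pr(\phi)\ge\alpha$ iff $\nu(\{v':(N,s,v')\models\phi\})\ge\alpha$; $N\models\psi$ means $(N,s,v)\models\psi$ for all $s,v$. For $\phi$ with no $X_j$, write $(N,s)\models\phi$ (independent of $v$). For local state $\ell$ of agent $i$: $S_\ell=\{s:L_i(s)=\ell\}$, $S_{\ell,\phi}=\{s\in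 S_\ell:(N,s)\models\phi\}$, $S_{\ell,\neg\phi}=\{s\in S_\ell:(N,s)\models\neg\phi\}$; $\mu_{s,\phi}(\mathit{ob})=\nu(\{v':\mathtt{A}^d_i(\phi,\ell,s,v'_i)=\mathit{ob}\})$; $\mathcal{F}_{\ell,\phi}(\phi)=\{\mu_{s,\phi}:s\in S_{\ell,\phi}\}$, $\mathcal{F}_{\ell,\phi}(\neg\phi)=\{\mu_{s,\phi}:s\in S_{\ell,\neg\phi}\}$; the evidence space is $\mathcal{E}_{\mathtt{A}_i,\phi,\ell}=(\{\phi,\neg\phi\},\{$"Yes","No","?"$\},\mathcal{F}_{\ell,\phi})$. For a generalized evidence space $\mathcal{E}=(\mathcal{H},\mathcal{O},\mathcal{F})$ ($\mathcal{F}$ maps each hypothesis to a set of probability measures on $\mathcal{O}$), $\mathcal{W}_{\mathcal{E}}(\mathit{ob},h)$ is the set of values $\mu_h(\mathit{ob})/\sum_{h'\in\mathcal{H},\mathcal{F}(h')\neq\emptyset}\mu_{h'}(\mathit{ob})$ over all choices $\mu_{h'}\in\mathcal{F}(h')$ (one for each $h'$ with $\mathcal{F}(h')\ne\emptyset$, including $h$) for which the denominator is nonzero; $\underline{w}_{\mathcal{E}}(\mathit{ob},h)=\inf\mathcal{W}_{\mathcal{E}}(\mathit{ob},h)$ and $\overline{w}_{\mathcal{E}}(\mathit{ob},h)=\sup\mathcal{W}_{\mathcal{E}}(\mathit{ob},h)$, both set to $0$ if $\mathcal{W}_{\mathcal{E}}(\mathit{ob},h)=\emptyset$. Then $(N,s,v)\models\underline{\mathrm{Ev}}_i(\phi)=\alpha$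 iff $\underline{w}_{\mathcal{E}_{\mathtt{A}_i,\phi,L_i(s)}}(\mathtt{A}^d_i(\phi,L_i(s),s,v_i),\phi)=\alpha$ (similarly with $\ge,\le$ and with $\overline{\mathrm{Ev}}_i$, $\overline{w}$). *)

theory Defs
  imports "HOL-Probability.Probability"
begin

datatype answer = Yes | No | Unknown

datatype ('p, 'i) fm =
    Prop 'p
  | Neg "('p, 'i) fm"
  | And "('p, 'i) fm" "('p, 'i) fm"
  | Imp "('p, 'i) fm" "('p, 'i) fm"
  | K 'i "('p, 'i) fm"
  | X 'i "('p, 'i) fm"
  | PrGe "('p, 'i) fm" real

primrec X_free :: "('p, 'i) fm \<Rightarrow> bool" where
  "X_free (Prop p) = True"
| "X_free (Neg f) = X_free f"
| "X_free (And f g) = (X_free f \<and> X_free g)"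
| "X_free (Imp f g) = (X_free f \<and> X_free g)"
| "X_free (K i f) = X_free f"
| "X_free (X i f) = False"
| "X_free (PrGe f a) = X_free f"

text \<open>A derandomizer is a function from agents to coin-toss sequences (abstract type 'c).
  The set V of derandomizers is the whole type.\<close>
record ('st, 'p, 'i, 'l, 'c) pak =
  states :: "'st set"
  tv :: "'st \<Rightarrow> 'p \<Rightarrow> bool"
  loc :: "'i \<Rightarrow> 'st \<Rightarrow> 'l"
  alg :: "'i \<Rightarrow> ('p, 'i) fm \<Rightarrow> 'l \<Rightarrow> 'st \<Rightarrow> 'c \<Rightarrow> answer"
  nu :: "('i \<Rightarrow> 'c) measure"

definition pak_wf :: "('st, 'p, 'i, 'l, 'c) pak \<Rightarrow> bool" where
  "pak_wf N \<longleftrightarrow>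
     prob_space (nu N) \<and> space (nu N) = UNIV \<and> sets (nu N) = UNIV \<and>
     (\<forall>i f s a. s \<in> states N \<longrightarrow>
        ({v. alg N i f (loc N i s) s (v i) = a} \<noteq> {} \<longleftrightarrow>
         measure (nu N) {v. alg N i f (loc N i s) s (v i) = a} > 0))"

primrec sat :: "('st, 'p, 'i, 'l, 'c) pak \<Rightarrow> 'st \<Rightarrow> ('i \<Rightarrow> 'c) \<Rightarrow> ('p, 'i) fm \<Rightarrow> bool" where
  "sat N s v (Prop p) = tv N s p"
| "sat N s v (Neg f) = (\<not> sat N s v f)"
| "sat N s v (And f g) = (sat N s v f \<and> sat N s v g)"
| "sat N s v (Imp f g) = (sat N s v f \<longrightarrow> sat N s v g)"
| "sat N s v (K i f) = (\<forall>t \<in> states N. loc N i t = loc N i s \<longrightarrow> (\<forall>v'. sat N t v' f))"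
| "sat N s v (X i f) = (alg N i f (loc N i s) s (v i) = Yes)"
| "sat N s v (PrGe f a) = (measure (nu N) {v'. sat N s v' f} \<ge> a)"

text \<open>(N,s) |= phi for phi independent of the derandomizer (X-free phi).\<close>
definition holds :: "('st, 'p, 'i, 'l, 'c) pak \<Rightarrow> 'st \<Rightarrow> ('p, 'i) fm \<Rightarrow> bool" where
  "holds N s f \<longleftrightarrow> (\<forall>v. sat N s v f)"

text \<open>Generalized evidence spaces: hypotheses H, observations 'o, F h a set of
  probability measures on the (finite) observation space, given as functions.\<close>
definition ev_W :: "'h set \<Rightarrow> ('h \<Rightarrow> ('o \<Rightarrow> real) set) \<Rightarrow> 'o \<Rightarrow> 'h \<Rightarrow> real set" where
  "ev_W H F ob h =
     {\<mu> h ob / (\<Sum>h' \<in> {h' \<in> H. F h' \<noteq> {}}. \<mu> h' ob) | \<mu>.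
        h \<in> H \<and> F h \<noteq> {} \<and> (\<forall>h' \<in> H. F h' \<noteq> {} \<longrightarrow> \<mu> h' \<in> F h') \<and>
        (\<Sum>h' \<in> {h' \<in> H. F h' \<noteq> {}}. \<mu> h' ob) \<noteq> 0}"

definition w_lower :: "'h set \<Rightarrow> ('h \<Rightarrow> ('o \<Rightarrow> real) set) \<Rightarrow> 'o \<Rightarrow> 'h \<Rightarrow> real" where
  "w_lower H F ob h = (if ev_W H F ob h = {} then 0 else Inf (ev_W H F ob h))"

definition w_upper :: "'h set \<Rightarrow> ('h \<Rightarrow> ('o \<Rightarrow> real) set) \<Rightarrow> 'o \<Rightarrow> 'h \<Rightarrow> real" where
  "w_upper H F ob h = (if ev_W H F ob h = {} then 0 else Sup (ev_W H F ob h))"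

text \<open>The evidence space E_{A_i,phi,l}. Hypotheses: True stands for phi, False for neg phi.\<close>
definition S_loc :: "('st, 'p, 'i, 'l, 'c) pak \<Rightarrow> 'i \<Rightarrow> 'l \<Rightarrow> 'st set" where
  "S_loc N i l = {s \<in> states N. loc N i s = l}"

definition mu_obs :: "('st, 'p, 'i, 'l, 'c) pak \<Rightarrow> 'i \<Rightarrow> ('p, 'i) fm \<Rightarrow> 'l \<Rightarrow> 'st \<Rightarrow> answer \<Rightarrow> real" where
  "mu_obs N i f l s ob = measure (nu N) {v. alg N i f l s (v i) = ob}"

definition ev_F :: "('st, 'p, 'i, 'l, 'c) pak \<Rightarrow> 'i \<Rightarrow> ('p, 'i) fm \<Rightarrow> 'l \<Rightarrow> bool \<Rightarrow> (answer \<Rightarrow> real) set" where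
  "ev_F N i f l h =
     (if h then mu_obs N i f l ` {s \<in> S_loc N i l. holds N s f}
      else mu_obs N i f l ` {s \<in> S_loc N i l. holds N s (Neg f)})"

definition Ev_lower :: "('st, 'p, 'i, 'l, 'c) pak \<Rightarrow> 'i \<Rightarrow> ('p, 'i) fm \<Rightarrow> 'st \<Rightarrow> ('i \<Rightarrow> 'c) \<Rightarrow> real" where
  "Ev_lower N i f s v =
     w_lower UNIV (ev_F N i f (loc N i s)) (alg N i f (loc N i s) s (v i)) True"

definition Ev_upper :: "('st, 'p, 'i, 'l, 'c) pak \<Rightarrow> 'i \<Rightarrow> ('p, 'i) fm \<Rightarrow> 'st \<Rightarrow> ('i \<Rightarrow> 'c) \<Rightarrow> real" where
  "Ev_upper N i f s v =
     w_upper UNIV (ev_F N i f (loc N i s)) (alg N i f (loc N i s) s (v i)) True"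

end

theory Submission
  imports Defs
begin

text \<open>If \<open>\<phi>\<close> fails at \<open>s\<close>, the measure \<open>\<mu>\<^sub>s\<close> of the observations at \<open>s\<close> is a
  candidate for the hypothesis \<open>\<not>\<phi>\<close>, and the observation actually made has positive
  \<open>\<mu>\<^sub>s\<close>-probability.  Choosing \<open>\<mu>\<^sub>s\<close> for \<open>\<not>\<phi>\<close> therefore produces a weight for \<open>\<phi>\<close>
  strictly below 1, so the infimum of the weights cannot be 1.\<close>

lemma sat_X_free_indep: "X_free f \<Longrightarrow> sat N s v f = sat N s v' f"
  by (induction f arbitrary: s) auto

lemma holds_iff_sat_X_free: "X_free f \<Longrightarrow> holds N s f \<longleftrightarrow> sat N s v f"
  unfolding holds_def by (metis sat_X_free_indep)

lemma ev_W_empty: "F h = {} \<Longrightarrow> ev_W H F ob h = {}"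
  unfolding ev_W_def by simp

lemma ev_W_nonneg:
  assumes nonneg: "\<forall>g \<in> H. \<forall>\<mu> \<in> F g. \<mu> ob \<ge> 0"
    and "x \<in> ev_W H F ob h"
  shows "x \<ge> 0"
proof -
  obtain \<mu> where x: "x = \<mu> h ob / (\<Sum>h' \<in> {h' \<in> H. F h' \<noteq> {}}. \<mu> h' ob)"
    and "h \<in> H" "F h \<noteq> {}" and \<mu>: "\<forall>h' \<in> H. F h' \<noteq> {} \<longrightarrow> \<mu> h' \<in> F h'"
    using assms(2) unfolding ev_W_def by blast
  then have "\<mu> h ob \<ge> 0" using nonneg by blast
  moreover have "(\<Sum>h' \<in> {h' \<in> H. F h' \<noteq> {}}. \<mu> h' ob) \<ge> 0"
    using \<mu> nonneg by (intro sum_nonneg) blast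
  ultimately show ?thesis unfolding x by simp
qed

lemma ev_W_ex_less_1:
  assumes "finite H"
    and nonneg: "\<forall>g \<in> H. \<forall>\<mu> \<in> F g. \<mu> ob \<ge> 0"
    and "h \<in> H" "F h \<noteq> {}" "h' \<in> H" "h' \<noteq> h" "\<mu>' \<in> F h'" "\<mu>' ob > 0"
  shows "\<exists>x \<in> ev_W H F ob h. x < 1"
proof -
  define \<mu> where "\<mu> = (\<lambda>g. if g = h' then \<mu>' else SOME m. m \<in> F g)"
  define A where "A = {g \<in> H. F g \<noteq> {}}"
  have \<mu>_in: "\<forall>g \<in> H. F g \<noteq> {} \<longrightarrow> \<mu> g \<in> F g"
    unfolding \<mu>_def using assms(7) by (simp add: some_in_eq)
  have "{h, h'} \<subseteq> A" using assms(3-7) unfolding A_def by blast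
  moreover have "\<forall>g \<in> A. \<mu> g ob \<ge> 0" using \<mu>_in nonneg unfolding A_def by blast
  ultimately have "(\<Sum>g \<in> {h, h'}. \<mu> g ob) \<le> (\<Sum>g \<in> A. \<mu> g ob)"
    using \<open>finite H\<close> unfolding A_def by (intro sum_mono2) auto
  then have sum_ge: "\<mu> h ob + \<mu>' ob \<le> (\<Sum>g \<in> A. \<mu> g ob)"
    using \<open>h' \<noteq> h\<close> by (simp add: \<mu>_def)
  have "\<mu> h ob \<ge> 0" using \<mu>_in nonneg assms(3,4) by blast
  then have sum_pos: "(\<Sum>g \<in> A. \<mu> g ob) > 0"
    using sum_ge \<open>\<mu>' ob > 0\<close> by linarith
  have "\<mu> h ob / (\<Sum>g \<in> A. \<mu> g ob) < 1"
    using sum_ge sum_pos \<open>\<mu>' ob > 0\<close> by (simp add: divide_less_eq)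
  moreover have "\<mu> h ob / (\<Sum>g \<in> A. \<mu> g ob) \<in> ev_W H F ob h"
    unfolding ev_W_def A_def[symmetric]
    using \<mu>_in assms(3,4) sum_pos by (intro CollectI exI[of _ \<mu>]) simp
  ultimately show ?thesis by blast
qed

lemma w_lower_less_1:
  assumes "finite H"
    and nonneg: "\<forall>g \<in> H. \<forall>\<mu> \<in> F g. \<mu> ob \<ge> 0"
    and "h \<in> H" "h' \<in> H" "h' \<noteq> h" "\<mu>' \<in> F h'" "\<mu>' ob > 0"
  shows "w_lower H F ob h < 1"
proof (cases "F h = {}")
  case True
  then show ?thesis by (simp add: w_lower_def ev_W_empty)
next
  case False
  obtain x where x: "x \<in> ev_W H F ob h" "x < 1"
    using ev_W_ex_less_1[OF assms(1) nonneg assms(3) False assms(4-7)]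
    by blast
  have "bdd_below (ev_W H F ob h)"
  proof (rule bdd_belowI)
    fix y assume "y \<in> ev_W H F ob h"
    then show "0 \<le> y" by (rule ev_W_nonneg[OF nonneg])
  qed
  then have "Inf (ev_W H F ob h) \<le> x" using x(1) by (rule cInf_lower[rotated])
  then show ?thesis using x unfolding w_lower_def by auto
qed

lemma mu_obs_nonneg: "mu_obs N i f l s ob \<ge> 0"
  unfolding mu_obs_def by simp

lemma ev_F_nonneg: "\<mu> \<in> ev_F N i f l h \<Longrightarrow> \<mu> ob \<ge> 0"
  unfolding ev_F_def by (auto simp: mu_obs_nonneg split: if_splits)

lemma mu_obs_in_ev_F_False:
  "s \<in> states N \<Longrightarrow> holds N s (Neg f) \<Longrightarrow>
    mu_obs N i f (loc N i s) s \<in> ev_F N i f (loc N i s) False"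
  unfolding ev_F_def S_loc_def by auto

lemma mu_obs_observed_pos:
  assumes "pak_wf N" "s \<in> states N"
  shows "mu_obs N i f (loc N i s) s (alg N i f (loc N i s) s (v i)) > 0"
proof -
  have "v \<in> {v'. alg N i f (loc N i s) s (v' i) = alg N i f (loc N i s) s (v i)}" by simp
  then show ?thesis using assms unfolding pak_wf_def mu_obs_def by blast
qed

lemma Ev_lower_less_1:
  assumes "pak_wf N" "s \<in> states N" "holds N s (Neg f)"
  shows "Ev_lower N i f s v < 1"
proof -
  have "w_lower UNIV (ev_F N i f (loc N i s)) (alg N i f (loc N i s) s (v i)) True < 1"
  proof (rule w_lower_less_1)
    show "mu_obs N i f (loc N i s) s \<in> ev_F N i f (loc N i s) False"
      using assms(2,3) by (rule mu_obs_in_ev_F_False)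
    show "mu_obs N i f (loc N i s) s (alg N i f (loc N i s) s (v i)) > 0"
      using assms(1,2) by (rule mu_obs_observed_pos)
  qed (auto simp: ev_F_nonneg)
  then show ?thesis unfolding Ev_lower_def .
qed

theorem proposition5p2:
  fixes N :: "('st, 'p, 'i, 'l, 'c) pak" and i :: 'i and \<phi> :: "('p, 'i) fm"
  assumes "pak_wf N" and "X_free \<phi>"
  shows "\<forall>s \<in> states N. \<forall>v. Ev_lower N i \<phi> s v = 1 \<longrightarrow> sat N s v \<phi>"
proof (intro ballI allI impI)
  fix s v
  assume "s \<in> states N" "Ev_lower N i \<phi> s v = 1"
  show "sat N s v \<phi>"
  proof (rule ccontr)
    assume "\<not> sat N s v \<phi>"
    then have "holds N s (Neg \<phi>)"
      using holds_iff_sat_X_free[of "Neg \<phi>" N s v] \<open>X_free \<phi>\<close> by simp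
    then have "Ev_lower N i \<phi> s v < 1"
      by (rule Ev_lower_less_1[OF \<open>pak_wf N\<close> \<open>s \<in> states N\<close>])
    then show False using \<open>Ev_lower N i \<phi> s v = 1\<close> by simp
  qed
qed

end
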